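(* Let $\mu$ be a locally finite positive Borel measure on $\mathbb{R}$, fix $k\in\mathbb{N}$, and fix a dyadic grid $\mathcal{D}$ in $\mathbb{R}$. Then: (1) For every $Q\in\mathcal{D}$, \[ \dim L_{Q;k}^{2}(\mu)=\dim\big(\mathrm{Range}\,\boldsymbol{M}_{Q_{\mathrm{left}},k}\cap\mathrm{Range}\,\boldsymbol{M}_{Q_{\mathrm{right}},k}\big), \] where $Q_{\mathrm{left}},Q_{\mathrm{right}}$ are the left and right halves of $Q$. In particular, $\dim L_{Q;k}^{2}(\mu)=k$ for all $Q\in\mathcal{D}$ if and only if $\boldsymbol{M}_{Q,k}\succ0$ (positive definite) for all $Q\in\mathcal{D}$. (2) If $\boldsymbol{M}_{Q,k}\succ0$ for all $Q\in\mathcal{D}$, then for each $Q\in\mathcal{D}$ one can choose an orthonormal basis $\{a_{Q}^{\mu,\ell}\}_{\ell=1}^{k}$ of $L_{Q;k}^{2}(\mu)$ (orthonormal in $L^{2}(\mu)$) such that, in addition to $\int a_{Q}^{\mu,\ell}(x)x^{i}d\mu(x)=0$ for $0\le i\le k-1$, the following additional moment conditions hold: \[ \int a_{Q}^{\mu,\ell}(x)\,x^{i}\,d\mu(x)=0\qquad\text{for all }2\le\ell\le k\text{ and }k\le i\le k+\ell-2 . \]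
   Context: For a dyadic interval $Q$, $Q_{\mathrm{left}}$ and $Q_{\mathrm{right}}$ are its two dyadic halves. $L_{Q;k}^{2}(\mu)$ is the subspace of $L^{2}(\mu)$ consisting of functions $f=\mathbf{1}_{Q_{\mathrm{left}}}p+\mathbf{1}_{Q_{\mathrm{right}}}q$ with $p,q$ real polynomials of degree at most $k-1$ such that $\int_{Q}f(x)x^{i}d\mu(x)=0$ for $0\le i\le k-1$. For an interval $J$, $\boldsymbol{M}_{J,k}$ is the $k\times k$ matrix of moments with entries $(\boldsymbol{M}_{J,k})_{ij}=\int_{J}x^{i+j}d\mu(x)$, $0\le i,j\le k-1$, i.e. $\boldsymbol{M}_{J,k}=\int_J V_k(x)V_k(x)^{\mathrm{tr}}d\mu(x)$ with $V_k(x)=(1,x,\dots,x^{k-1})^{\mathrm{tr}}$. *)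

theory Defs
  imports "HOL-Analysis.Analysis" "HOL-Computational_Algebra.Polynomial" "HOL-Library.Function_Algebras"
begin

definition locally_finite_borel :: "real measure \<Rightarrow> bool" where
  "locally_finite_borel \<mu> \<longleftrightarrow> sets \<mu> = sets borel \<and>
     (\<forall>K. compact K \<longrightarrow> emeasure \<mu> K < \<infinity>)"

definition Q_left :: "real set \<Rightarrow> real set" where
  "Q_left Q = {Inf Q ..< (Inf Q + Sup Q) / 2}"

definition Q_right :: "real set \<Rightarrow> real set" where
  "Q_right Q = {(Inf Q + Sup Q) / 2 ..< Sup Q}"

definition dyadic_grid :: "real set set \<Rightarrow> bool" where
  "dyadic_grid D \<longleftrightarrow>
     (\<forall>Q\<in>D. \<exists>a (j::int). Q = {a ..< a + 2 powr j}) \<and>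
     (\<forall>(j::int) (x::real). \<exists>!Q. Q \<in> D \<and> x \<in> Q \<and> Sup Q - Inf Q = 2 powr j) \<and>
     (\<forall>Q\<in>D. Q_left Q \<in> D \<and> Q_right Q \<in> D)"

text \<open>The space L^2_{Q;k}(mu) (as a set of representative functions).\<close>
definition L2_Qk :: "real measure \<Rightarrow> real set \<Rightarrow> nat \<Rightarrow> (real \<Rightarrow> real) set" where
  "L2_Qk \<mu> Q k = {f. \<exists>p q :: real poly.
      (\<forall>i\<ge>k. coeff p i = 0) \<and> (\<forall>i\<ge>k. coeff q i = 0) \<and>
      f = (\<lambda>x. indicator (Q_left Q) x * poly p x + indicator (Q_right Q) x * poly q x) \<and>
      (\<forall>i<k. (LINT x:Q|\<mu>. f x * x ^ i) = 0)}"

text \<open>Linear independence in L^2(mu), i.e. modulo mu-a.e. equality, and the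
  dimension of the image of a set of functions in L^2(mu).\<close>
definition L2_indep :: "real measure \<Rightarrow> (real \<Rightarrow> real) set \<Rightarrow> bool" where
  "L2_indep \<mu> F \<longleftrightarrow> (\<forall>c. (AE x in \<mu>. (\<Sum>f\<in>F. c f * f x) = 0) \<longrightarrow> (\<forall>f\<in>F. c f = 0))"

definition L2_dim :: "real measure \<Rightarrow> (real \<Rightarrow> real) set \<Rightarrow> nat" where
  "L2_dim \<mu> S = Max {card F | F. finite F \<and> F \<subseteq> S \<and> L2_indep \<mu> F}"

text \<open>Moment matrix M_{J,k} (entries for 0 <= i,j <= k-1).\<close>
definition moment_mat :: "real measure \<Rightarrow> real set \<Rightarrow> nat \<Rightarrow> nat \<Rightarrow> nat \<Rightarrow> real" where
  "moment_mat \<mu> J k i j = (LINT x:J|\<mu>. x ^ (i + j))"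

text \<open>Vectors of R^k are represented by functions nat => real vanishing from k on.\<close>
definition vscale :: "real \<Rightarrow> (nat \<Rightarrow> real) \<Rightarrow> (nat \<Rightarrow> real)" where
  "vscale c v = (\<lambda>i. c * v i)"

definition mat_range :: "(nat \<Rightarrow> nat \<Rightarrow> real) \<Rightarrow> nat \<Rightarrow> (nat \<Rightarrow> real) set" where
  "mat_range M k = {(\<lambda>i. if i < k then (\<Sum>j<k. M i j * v j) else 0) | v. \<forall>j\<ge>k. v j = 0}"

definition pos_def :: "(nat \<Rightarrow> nat \<Rightarrow> real) \<Rightarrow> nat \<Rightarrow> bool" where
  "pos_def M k \<longleftrightarrow> (\<forall>i<k. \<forall>j<k. M i j = M j i) \<and>
     (\<forall>v. (\<exists>i<k. v i \<noteq> 0) \<longrightarrow> (\<Sum>i<k. \<Sum>j<k. v i * M i j * v j) > 0)"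

end

theory Submission
  imports Defs
begin

(* Write f in L^2_{Q;k}(mu) as 1_L p + 1_R q, where u and v are the coefficient vectors of p and q.
   The moment conditions defining L^2_{Q;k}(mu) read M_L u + M_R v = 0, and the vector of moments of
   f over L is M_L u = M_R (-v).  So f |-> M_L u maps L^2_{Q;k}(mu) onto the intersection of the
   ranges of M_L and M_R, and it is injective modulo null functions: if M_L u = 0 then M_R v = 0
   too, and the integral of f^2 is u^T M_L u + v^T M_R v = 0.  This gives the dimension formula.
   A moment matrix is a Gram matrix, hence positive definite iff injective iff of full range; and
   every cell of the grid is a half of its parent.
   The basis of part (2) is chosen from a_k down to a_1: a_l must have l - 1 further vanishing
   moments and be orthogonal to a_(l+1), ..., a_k. These are k - 1 linear conditions on a
   k-dimensional space, so a normalized solution exists, and k orthonormal functions span it. *)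

section \<open>Finitely supported vectors and matrices\<close>

lemma sum_fun_apply: "(\<Sum>s\<in>S. f s) x = (\<Sum>s\<in>S. f s x)"
  by (induct S rule: infinite_finite_induct) auto

context vector_space
begin

lemma inj_on_independent_if_scalars_zero:
  assumes "finite F" and zero: "\<forall>c. (\<Sum>f\<in>F. scale (c f) (\<phi> f)) = 0 \<longrightarrow> (\<forall>f\<in>F. c f = 0)"
  shows "inj_on \<phi> F \<and> independent (\<phi> ` F)"
proof
  show inj: "inj_on \<phi> F"
  proof (rule inj_onI, rule ccontr)
    fix f g assume fg: "f \<in> F" "g \<in> F" "\<phi> f = \<phi> g" "f \<noteq> g"
    define c where "c h = (if h = f then (1::'a) else if h = g then -1 else 0)" for h
    have "(\<Sum>h\<in>F. scale (c h) (\<phi> h)) = (\<Sum>h\<in>{f, g}. scale (c h) (\<phi> h))"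
      by (rule sum.mono_neutral_right) (use assms fg in \<open>auto simp: c_def\<close>)
    also have "\<dots> = 0"
      using fg by (simp add: c_def)
    finally have "c f = 0"
      using zero fg(1) by blast
    then show False
      by (simp add: c_def)
  qed
  show "independent (\<phi> ` F)"
  proof (rule independent_if_scalars_zero)
    fix u v assume "(\<Sum>v\<in>\<phi> ` F. scale (u v) v) = 0" "v \<in> \<phi> ` F"
    then show "u v = 0"
      using zero[rule_format, of "u \<circ> \<phi>"] by (auto simp: sum.reindex[OF inj])
  qed (use assms in simp)
qed

lemma scalars_zero_if_inj_on_independent:
  assumes "finite F" "inj_on \<phi> F" "independent (\<phi> ` F)"
    and sum: "(\<Sum>f\<in>F. scale (c f) (\<phi> f)) = 0" and f: "f \<in> F"
  shows "c f = 0"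
proof -
  define u where "u v = c (the_inv_into F \<phi> v)" for v
  have "(\<Sum>v\<in>\<phi> ` F. scale (u v) v) = 0"
    using sum by (simp add: sum.reindex[OF assms(2)] u_def the_inv_into_f_f[OF assms(2)])
  then have "u (\<phi> f) = 0"
    using assms(1,3) f unfolding independent_explicit_finite_subsets by blast
  then show "c f = 0"
    by (simp add: u_def the_inv_into_f_f[OF assms(2) f])
qed

lemma scalars_zero_iff_inj_on_independent:
  assumes "finite F"
  shows "(\<forall>c. (\<Sum>f\<in>F. scale (c f) (\<phi> f)) = 0 \<longrightarrow> (\<forall>f\<in>F. c f = 0))
    \<longleftrightarrow> inj_on \<phi> F \<and> independent (\<phi> ` F)"
proof
  assume "inj_on \<phi> F \<and> independent (\<phi> ` F)"
  then show "\<forall>c. (\<Sum>f\<in>F. scale (c f) (\<phi> f)) = 0 \<longrightarrow> (\<forall>f\<in>F. c f = 0)"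
    using scalars_zero_if_inj_on_independent[OF assms] by (intro allI impI ballI) auto
qed (rule inj_on_independent_if_scalars_zero[OF assms])

lemma independent_card_le_dim_if_finite_span:
  assumes "V \<subseteq> span E" "finite E" "B \<subseteq> V" "independent B"
  shows "finite B \<and> card B \<le> dim V"
proof -
  obtain C where C: "C \<subseteq> V" "independent C" "V \<subseteq> span C" "card C = dim V"
    using basis_exists by blast
  have "C \<subseteq> span E"
    using C(1) assms(1) by (rule order_trans)
  then have "finite C"
    using independent_span_bound[OF assms(2) C(2)] by simp
  moreover have "B \<subseteq> span C"
    using assms(3) C(3) by (rule order_trans)
  ultimately show ?thesis
    using independent_span_bound[OF _ assms(4)] C(4) by metis
qed

lemma subset_span_if_dim_eq_card:
  assumes "V \<subseteq> span E" "finite E" "dim V = card E"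
  shows "E \<subseteq> span V"
proof
  obtain C where C: "C \<subseteq> V" "independent C" "V \<subseteq> span C" "card C = dim V"
    using basis_exists by blast
  have "C \<subseteq> span E"
    using C(1) assms(1) by (rule order_trans)
  then have fin: "finite C"
    using independent_span_bound[OF assms(2) C(2)] by simp
  fix e assume e: "e \<in> E"
  show "e \<in> span V"
  proof (rule ccontr)
    assume "e \<notin> span V"
    then have e_C: "e \<notin> span C"
      using span_mono[OF C(1)] by auto
    then have "e \<notin> C"
      using span_base by auto
    have "independent (insert e C)"
      using independent_insertI[OF e_C C(2)] .
    moreover have "insert e C \<subseteq> span E"
      using \<open>C \<subseteq> span E\<close> e span_base by auto
    ultimately have "card (insert e C) \<le> card E"
      using independent_span_bound[OF assms(2)] by simp
    then show False
      using fin \<open>e \<notin> C\<close> C(4) assms(3) by simp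
  qed
qed

end

interpretation vs: vector_space vscale
  by unfold_locales (auto simp: vscale_def algebra_simps)

definition fin_vecs :: "nat \<Rightarrow> (nat \<Rightarrow> real) set" where
  "fin_vecs m = {v. \<forall>i\<ge>m. v i = 0}"

definition unit_vec :: "nat \<Rightarrow> nat \<Rightarrow> real" where
  "unit_vec j = (\<lambda>i. if i = j then 1 else 0)"

lemma unit_vec_in_fin_vecs: "j < m \<Longrightarrow> unit_vec j \<in> fin_vecs m"
  by (simp add: fin_vecs_def unit_vec_def)

lemma lincomb_unit_vecs: "(\<Sum>j<m. vscale (c j) (unit_vec j)) = (\<lambda>i. if i < m then c i else 0)"
  by (auto simp: fun_eq_iff sum_fun_apply vscale_def unit_vec_def if_distrib cong: if_cong)

lemma fin_vecs_subset_span: "fin_vecs m \<subseteq> vs.span (unit_vec ` {..<m})"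
proof
  fix v assume "v \<in> fin_vecs m"
  then have "v = (\<Sum>j<m. vscale (v j) (unit_vec j))"
    by (auto simp: lincomb_unit_vecs fin_vecs_def fun_eq_iff)
  also have "\<dots> \<in> vs.span (unit_vec ` {..<m})"
    by (intro vs.span_sum vs.span_scale vs.span_base) auto
  finally show "v \<in> vs.span (unit_vec ` {..<m})" .
qed

lemma inj_on_independent_unit_vecs: "inj_on unit_vec {..<m} \<and> vs.independent (unit_vec ` {..<m})"
proof -
  have "\<forall>c. (\<Sum>j<m. vscale (c j) (unit_vec j)) = 0 \<longrightarrow> (\<forall>i\<in>{..<m}. c i = 0)"
    by (auto simp: lincomb_unit_vecs fun_eq_iff dest: spec)
  then show ?thesis
    by (intro vs.inj_on_independent_if_scalars_zero) simp_all
qed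

lemma card_unit_vecs: "card (unit_vec ` {..<m}) = m"
  using card_image inj_on_independent_unit_vecs by fastforce

lemma dim_fin_vecs: "vs.dim (fin_vecs m) = m"
  by (rule vs.dim_unique[OF _ fin_vecs_subset_span _ card_unit_vecs])
    (use unit_vec_in_fin_vecs inj_on_independent_unit_vecs in auto)

lemma dim_le_if_subset_fin_vecs: "S \<subseteq> fin_vecs m \<Longrightarrow> vs.dim S \<le> m"
  using vs.dim_le_card[OF order_trans[OF _ fin_vecs_subset_span]] card_unit_vecs by fastforce

lemma card_le_dim_if_subset_fin_vecs:
  "S \<subseteq> fin_vecs m \<Longrightarrow> B \<subseteq> S \<Longrightarrow> vs.independent B \<Longrightarrow> finite B \<and> card B \<le> vs.dim S"
  by (rule vs.independent_card_le_dim_if_finite_span[OF order_trans[OF _ fin_vecs_subset_span]]) auto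

lemma fin_vecs_subset_span_if_dim:
  assumes "S \<subseteq> fin_vecs m" "vs.dim S = m"
  shows "fin_vecs m \<subseteq> vs.span S"
proof -
  have "unit_vec ` {..<m} \<subseteq> vs.span S"
    by (rule vs.subset_span_if_dim_eq_card[OF order_trans[OF assms(1) fin_vecs_subset_span]])
      (simp_all add: assms(2) card_unit_vecs)
  then show ?thesis
    using fin_vecs_subset_span vs.span_minimal[OF _ vs.subspace_span] by (metis order_trans)
qed

definition mat_vec :: "(nat \<Rightarrow> nat \<Rightarrow> real) \<Rightarrow> nat \<Rightarrow> (nat \<Rightarrow> real) \<Rightarrow> nat \<Rightarrow> real" where
  "mat_vec M m w = (\<lambda>i. if i < m then \<Sum>j<m. M i j * w j else 0)"

lemma mat_range_iff: "y \<in> mat_range M m \<longleftrightarrow> (\<exists>w. y = mat_vec M m w)"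
proof
  assume "\<exists>w. y = mat_vec M m w"
  then obtain w where "y = mat_vec M m w"
    by blast
  then have "y = (\<lambda>i. if i < m then \<Sum>j<m. M i j * (if j < m then w j else 0) else 0)"
    by (simp add: mat_vec_def fun_eq_iff)
  then show "y \<in> mat_range M m"
    unfolding mat_range_def by force
qed (auto simp: mat_range_def mat_vec_def)

lemma mat_range_subset_fin_vecs: "mat_range M m \<subseteq> fin_vecs m"
  by (auto simp: mat_range_iff mat_vec_def fin_vecs_def)

lemma mat_vec_lincomb:
  "mat_vec M m (\<lambda>j. u j + c * v j) = (\<lambda>i. mat_vec M m u i + c * mat_vec M m v i)"
  by (auto simp: mat_vec_def fun_eq_iff sum.distrib sum_distrib_left algebra_simps)

lemma mat_vec_uminus: "mat_vec M m (\<lambda>j. - v j) = - mat_vec M m v"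
  by (simp add: mat_vec_def fun_eq_iff sum_negf)

lemma subspace_mat_range: "vs.subspace (mat_range M m)"
proof -
  have "mat_vec M m u + vscale c (mat_vec M m v) = mat_vec M m (\<lambda>j. u j + c * v j)" for u v c
    by (simp add: mat_vec_lincomb vscale_def plus_fun_def)
  then have lin: "mat_vec M m u + vscale c (mat_vec M m v) \<in> mat_range M m" for u v c
    unfolding mat_range_iff by blast
  have zero: "mat_vec M m (\<lambda>_. 0) = 0"
    by (simp add: mat_vec_def fun_eq_iff)
  have "vscale c x \<in> mat_range M m" "x + y \<in> mat_range M m"
    if "x \<in> mat_range M m" "y \<in> mat_range M m" for c x y
    using that lin[of "\<lambda>_. 0" c] lin[of _ 1] by (auto simp: mat_range_iff zero vscale_def)
  moreover have "0 \<in> mat_range M m"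
    unfolding mat_range_iff using zero by metis
  ultimately show ?thesis
    unfolding vs.subspace_def by blast
qed

lemma quadratic_form_mat_vec:
  "(\<Sum>i<m. \<Sum>j<m. c i * M i j * c j) = (\<Sum>i<m. c i * mat_vec M m c i)"
  by (simp add: mat_vec_def sum_distrib_left mult_ac)

lemma exists_nonzero_solution:
  fixes A :: "nat \<Rightarrow> nat \<Rightarrow> real"
  assumes "m < n"
  shows "\<exists>c. (\<exists>j<n. c j \<noteq> 0) \<and> (\<forall>i<m. (\<Sum>j<n. A i j * c j) = 0)"
proof (rule ccontr)
  assume no_solution: "\<nexists>c. (\<exists>j<n. c j \<noteq> 0) \<and> (\<forall>i<m. (\<Sum>j<n. A i j * c j) = 0)"
  define col where "col j = (\<lambda>i. if i < m then A i j else 0)" for j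
  have "\<forall>c. (\<Sum>j<n. vscale (c j) (col j)) = 0 \<longrightarrow> (\<forall>j\<in>{..<n}. c j = 0)"
  proof (intro allI impI)
    fix c assume "(\<Sum>j<n. vscale (c j) (col j)) = 0"
    moreover have "(\<Sum>j<n. A i j * c j) = (\<Sum>j<n. vscale (c j) (col j)) i" if "i < m" for i
      using that by (simp add: sum_fun_apply vscale_def col_def mult.commute)
    ultimately have "(\<Sum>j<n. A i j * c j) = 0" if "i < m" for i
      using that by simp
    then show "\<forall>j\<in>{..<n}. c j = 0"
      using no_solution by auto
  qed
  then have "inj_on col {..<n}" "vs.independent (col ` {..<n})"
    using vs.inj_on_independent_if_scalars_zero[of "{..<n}" col] by simp_all
  moreover have "col ` {..<n} \<subseteq> fin_vecs m"
    by (auto simp: col_def fin_vecs_def)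
  ultimately have "card (col ` {..<n}) \<le> m"
    using card_le_dim_if_subset_fin_vecs[OF order_refl] dim_fin_vecs by metis
  then show False
    using \<open>inj_on col {..<n}\<close> assms by (simp add: card_image)
qed

lemma mat_range_eq_fin_vecs_if_inj:
  assumes inj: "\<And>c. mat_vec M m c = 0 \<Longrightarrow> \<forall>i<m. c i = 0"
  shows "mat_range M m = fin_vecs m"
proof
  show "fin_vecs m \<subseteq> mat_range M m"
  proof
    fix y assume y: "y \<in> fin_vecs m"
    \<comment> \<open>A nontrivial solution of the system with matrix (M | y) solves M w = y once rescaled,
      since injectivity of M forces its last coordinate to be nonzero.\<close>
    define A where "A i t = (if t < m then M i t else y i)" for i t
    obtain l where l: "\<exists>t<Suc m. l t \<noteq> 0" "\<forall>i<m. (\<Sum>t<Suc m. A i t * l t) = 0"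
      using exists_nonzero_solution[of m "Suc m" A] by auto
    have eq: "(\<Sum>j<m. M i j * l j) + y i * l m = 0" if "i < m" for i
      using l(2) that by (simp add: A_def)
    have "l m \<noteq> 0"
    proof
      assume "l m = 0"
      then have "mat_vec M m l = 0"
        using eq by (simp add: mat_vec_def fun_eq_iff)
      then show False
        using inj l(1) \<open>l m = 0\<close> less_Suc_eq by auto
    qed
    have "y i = (\<Sum>j<m. M i j * (- l j / l m))" if "i < m" for i
    proof -
      have "(\<Sum>j<m. M i j * l j) = - (y i * l m)"
        using eq[OF that] by (simp add: eq_neg_iff_add_eq_0)
      then show ?thesis
        using \<open>l m \<noteq> 0\<close> by (simp add: sum_divide_distrib[symmetric] sum_negf)
    qed
    then have "y = mat_vec M m (\<lambda>j. - l j / l m)"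
      using y by (auto simp: mat_vec_def fin_vecs_def fun_eq_iff)
    then show "y \<in> mat_range M m"
      by (auto simp: mat_range_iff)
  qed
qed (rule mat_range_subset_fin_vecs)

lemma inj_if_mat_range_eq_fin_vecs:
  assumes sym: "\<forall>i<m. \<forall>j<m. M i j = M j i"
    and surj: "mat_range M m = fin_vecs m" and c: "mat_vec M m c = 0"
  shows "\<forall>i<m. c i = 0"
proof -
  have "(\<lambda>i. if i < m then c i else 0) \<in> mat_range M m"
    unfolding surj by (simp add: fin_vecs_def)
  then obtain w where w: "(\<lambda>i. if i < m then c i else 0) = mat_vec M m w"
    by (auto simp: mat_range_iff)
  have ci: "c i = (\<Sum>j<m. M i j * w j)" if "i < m" for i
    using fun_cong[OF w, of i] that by (simp add: mat_vec_def)
  have Mc: "(\<Sum>i<m. M j i * c i) = 0" if "j < m" for j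
    using fun_cong[OF c, of j] that by (simp add: mat_vec_def)
  have "(\<Sum>i<m. c i * c i) = (\<Sum>i<m. c i * (\<Sum>j<m. M i j * w j))"
    using ci by simp
  also have "\<dots> = (\<Sum>j<m. w j * (\<Sum>i<m. M j i * c i))"
    unfolding sum_distrib_left using sym by (subst sum.swap) (auto simp: mult_ac intro!: sum.cong)
  also have "\<dots> = 0"
    using Mc by simp
  finally show ?thesis
    using sum_nonneg_eq_0_iff[of "{..<m}" "\<lambda>i. c i * c i"] by simp
qed

lemma inj_if_pos_def:
  assumes "pos_def M m" "mat_vec M m c = 0"
  shows "\<forall>i<m. c i = 0"
  using assms quadratic_form_mat_vec unfolding pos_def_def by fastforce

section \<open>Orthogonality in L^2\<close>

lemma integral_lincomb_mult:
  fixes f :: "'i \<Rightarrow> 'a \<Rightarrow> real"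
  assumes "\<And>j. j \<in> I \<Longrightarrow> integrable M (\<lambda>x. f j x * h x)"
  shows "(LINT x|M. (\<Sum>j\<in>I. c j * f j x) * h x) = (\<Sum>j\<in>I. c j * (LINT x|M. f j x * h x))"
proof -
  have "(LINT x|M. (\<Sum>j\<in>I. c j * f j x) * h x) = (LINT x|M. (\<Sum>j\<in>I. c j * (f j x * h x)))"
    by (simp add: sum_distrib_right mult.assoc)
  also have "\<dots> = (\<Sum>j\<in>I. c j * (LINT x|M. f j x * h x))"
    using assms by (subst Bochner_Integration.integral_sum) auto
  finally show ?thesis .
qed

lemma L2_indep_if_orthogonal:
  assumes "finite F"
    and int: "\<And>f g. f \<in> F \<Longrightarrow> g \<in> F \<Longrightarrow> integrable M (\<lambda>x. f x * g x)"
    and orth: "\<And>f g. f \<in> F \<Longrightarrow> g \<in> F \<Longrightarrow> f \<noteq> g \<Longrightarrow> (LINT x|M. f x * g x) = 0"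
    and nonzero: "\<And>f. f \<in> F \<Longrightarrow> (LINT x|M. f x * f x) \<noteq> 0"
  shows "L2_indep M F"
proof -
  have "c g = 0" if ae: "AE x in M. (\<Sum>f\<in>F. c f * f x) = 0" and g: "g \<in> F" for c g
  proof -
    have "AE x in M. (\<Sum>f\<in>F. c f * f x) * g x = 0"
      using ae by eventually_elim simp
    then have "0 = (LINT x|M. (\<Sum>f\<in>F. c f * f x) * g x)"
      by (simp add: integral_eq_zero_AE)
    also have "\<dots> = (\<Sum>f\<in>F. c f * (LINT x|M. f x * g x))"
      by (rule integral_lincomb_mult) (use int g in auto)
    also have "\<dots> = c g * (LINT x|M. g x * g x)"
      using orth g by (simp add: sum.remove[OF assms(1) g])
    finally have "c g * (LINT x|M. g x * g x) = 0" ..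
    with nonzero[OF g] show "c g = 0"
      by simp
  qed
  then show ?thesis
    unfolding L2_indep_def by blast
qed

lemma inj_on_if_orthonormal:
  fixes e :: "'i \<Rightarrow> 'a \<Rightarrow> real"
  assumes "\<And>l m. l \<in> I \<Longrightarrow> m \<in> I \<Longrightarrow> (LINT x|M. e l x * e m x) = (if l = m then 1 else 0)"
  shows "inj_on e I"
proof (rule inj_onI, rule ccontr)
  fix l m assume "l \<in> I" "m \<in> I" "e l = e m" "l \<noteq> m"
  then show False
    using assms[of l m] assms[of l l] by simp
qed

section \<open>A half-open interval and its two halves\<close>

lemma poly_eq_sum_coeff:
  fixes p :: "real poly"
  assumes "\<forall>i\<ge>k. coeff p i = 0"
  shows "poly p x = (\<Sum>j<k. coeff p j * x ^ j)"
proof -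
  have "poly p x = (\<Sum>j<max (Suc (degree p)) k. coeff p j * x ^ j)"
    unfolding poly_altdef by (rule sum.mono_neutral_left) (auto simp: coeff_eq_0)
  also have "\<dots> = (\<Sum>j<k. coeff p j * x ^ j)"
    by (rule sum.mono_neutral_right) (use assms in auto)
  finally show ?thesis .
qed

lemma coeff_poly_sum_monom:
  fixes u :: "nat \<Rightarrow> real"
  shows "coeff (\<Sum>j<k. monom (u j) j) i = (if i < k then u i else 0)"
  "poly (\<Sum>j<k. monom (u j) j) x = (\<Sum>j<k. u j * x ^ j)"
  by (simp_all add: coeff_sum poly_sum poly_monom sum.delta')

definition adapted_basis :: "real measure \<Rightarrow> real set \<Rightarrow> nat \<Rightarrow> (nat \<Rightarrow> real \<Rightarrow> real) \<Rightarrow> bool" where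
  "adapted_basis \<mu> Q k e \<longleftrightarrow>
     (\<forall>l\<in>{1..k}. e l \<in> L2_Qk \<mu> Q k) \<and>
     (\<forall>l\<in>{1..k}. \<forall>m\<in>{1..k}. (LINT x|\<mu>. e l x * e m x) = (if l = m then 1 else 0)) \<and>
     (\<forall>f\<in>L2_Qk \<mu> Q k. \<exists>c. AE x in \<mu>. f x = (\<Sum>l=1..k. c l * e l x)) \<and>
     (\<forall>l\<in>{1..k}. \<forall>i<k. (LINT x|\<mu>. e l x * x ^ i) = 0) \<and>
     (\<forall>l\<in>{2..k}. \<forall>i\<in>{k..k+l-2}. (LINT x|\<mu>. e l x * x ^ i) = 0)"

locale split_interval =
  fixes \<mu> :: "real measure" and k :: nat and a b :: real
  assumes locally_finite: "locally_finite_borel \<mu>" and less: "a < b"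
begin

abbreviation "Q \<equiv> {a..<b}"
definition "L = {a..<(a + b) / 2}"
definition "R = {(a + b) / 2..<b}"

lemma Q_left_Q: "Q_left Q = L" and Q_right_Q: "Q_right Q = R"
  using less by (simp_all add: Q_left_def Q_right_def L_def R_def)

lemma L_R_subset: "L \<subseteq> {a..b}" "R \<subseteq> {a..b}"
  and L_R_sets: "L \<in> sets borel" "R \<in> sets borel"
  by (auto simp: L_def R_def)

lemma measurable_eq_borel: "measurable \<mu> borel = measurable borel (borel :: real measure)"
  using locally_finite by (intro measurable_cong_sets) (auto simp: locally_finite_borel_def)

definition bdd_supported :: "(real \<Rightarrow> real) \<Rightarrow> bool" where
  "bdd_supported f \<longleftrightarrow>
     f \<in> borel_measurable borel \<and> (\<exists>B. \<forall>x. \<bar>f x\<bar> \<le> B) \<and> (\<forall>x. x \<notin> {a..b} \<longrightarrow> f x = 0)"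

lemma integrable_bdd_supported:
  assumes "bdd_supported f"
  shows "integrable \<mu> f"
proof -
  obtain B where B: "\<forall>x. \<bar>f x\<bar> \<le> B" and supp: "\<forall>x. x \<notin> {a..b} \<longrightarrow> f x = 0"
    and meas: "f \<in> borel_measurable borel"
    using assms by (auto simp: bdd_supported_def)
  have "emeasure \<mu> {a..b} < \<infinity>" "{a..b} \<in> sets \<mu>"
    using locally_finite by (auto simp: locally_finite_borel_def)
  then have "integrable \<mu> (\<lambda>x. B * indicator {a..b} x)"
    by (intro integrable_mult_right integrable_real_indicator)
  then show ?thesis
  proof (rule Bochner_Integration.integrable_bound)
    show "f \<in> borel_measurable \<mu>"
      using meas measurable_eq_borel by simp
    show "AE x in \<mu>. norm (f x) \<le> norm (B * indicator {a..b} x)"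
    proof (rule AE_I2)
      fix x show "norm (f x) \<le> norm (B * indicator {a..b} x)"
        using B supp by (cases "x \<in> {a..b}") (auto intro: order_trans[OF _ abs_ge_self])
    qed
  qed
qed

lemma bdd_supported_add:
  assumes "bdd_supported f" "bdd_supported g"
  shows "bdd_supported (\<lambda>x. f x + g x)"
proof -
  obtain B C where "\<forall>x. \<bar>f x\<bar> \<le> B" "\<forall>x. \<bar>g x\<bar> \<le> C"
    using assms by (auto simp: bdd_supported_def)
  then have "\<forall>x. \<bar>f x + g x\<bar> \<le> B + C"
    by (metis abs_triangle_ineq add_mono order_trans)
  then show ?thesis
    using assms by (auto simp: bdd_supported_def)
qed

lemma bdd_supported_mult:
  assumes "bdd_supported f" "bdd_supported g"
  shows "bdd_supported (\<lambda>x. f x * g x)"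
proof -
  obtain B C where "\<forall>x. \<bar>f x\<bar> \<le> B" "\<forall>x. \<bar>g x\<bar> \<le> C"
    using assms by (auto simp: bdd_supported_def)
  then have "\<forall>x. \<bar>f x * g x\<bar> \<le> B * C"
    by (simp add: abs_mult mult_mono')
  then show ?thesis
    using assms by (auto simp: bdd_supported_def)
qed

lemma bdd_supported_mult_continuous:
  fixes g :: "real \<Rightarrow> real"
  assumes "bdd_supported f" "continuous_on UNIV g"
  shows "bdd_supported (\<lambda>x. f x * g x)"
proof -
  obtain B where B: "\<forall>x. \<bar>f x\<bar> \<le> B" and supp: "\<forall>x. x \<notin> {a..b} \<longrightarrow> f x = 0"
    using assms by (auto simp: bdd_supported_def)
  have "compact (g ` {a..b})"
    using assms(2) by (intro compact_continuous_image) (auto intro: continuous_on_subset)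
  then obtain C where C: "\<forall>x\<in>{a..b}. \<bar>g x\<bar> \<le> C"
    by (meson compact_imp_bounded bounded_real imageI)
  have "\<bar>f x * g x\<bar> \<le> B * C" for x
  proof (cases "x \<in> {a..b}")
    case True
    then show ?thesis
      using B C by (simp add: abs_mult mult_mono')
  next
    case False
    have "0 \<le> B" "0 \<le> C"
      using B C less by (fastforce, fastforce)
    then show ?thesis
      using supp False by simp
  qed
  moreover have "(\<lambda>x. f x * g x) \<in> borel_measurable borel"
    using assms borel_measurable_continuous_onI[OF assms(2)]
    by (intro borel_measurable_times) (auto simp: bdd_supported_def)
  ultimately show ?thesis
    using supp by (auto simp: bdd_supported_def)
qed

lemma bdd_supported_indicator:
  "J \<in> sets borel \<Longrightarrow> J \<subseteq> {a..b} \<Longrightarrow> bdd_supported (indicator J)"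
  by (auto simp: bdd_supported_def indicator_def intro!: exI[of _ 1])

lemma integrable_indicator_continuous:
  fixes g :: "real \<Rightarrow> real"
  assumes "J \<in> sets borel" "J \<subseteq> {a..b}" "continuous_on UNIV g"
  shows "integrable \<mu> (\<lambda>x. indicator J x * g x)"
  using bdd_supported_mult_continuous[OF bdd_supported_indicator[OF assms(1,2)] assms(3)]
  by (rule integrable_bdd_supported)

definition poly_vec :: "(nat \<Rightarrow> real) \<Rightarrow> real \<Rightarrow> real" where
  "poly_vec u x = (\<Sum>j<k. u j * x ^ j)"

lemma continuous_poly_vec: "continuous_on UNIV (poly_vec u)"
  unfolding poly_vec_def by (intro continuous_intros)

definition moment :: "real set \<Rightarrow> (real \<Rightarrow> real) \<Rightarrow> nat \<Rightarrow> real" where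
  "moment J f i = (LINT x|\<mu>. indicator J x * (f x * x ^ i))"

lemma moment_poly_vec:
  assumes "J \<in> sets borel" "J \<subseteq> {a..b}"
  shows "moment J (poly_vec u) i = (\<Sum>j<k. moment_mat \<mu> J k i j * u j)"
proof -
  have "moment J (poly_vec u) i = (LINT x|\<mu>. (\<Sum>j<k. u j * (indicator J x * x ^ (i + j))))"
    by (simp add: moment_def poly_vec_def sum_distrib_left sum_distrib_right power_add mult_ac)
  also have "\<dots> = (\<Sum>j<k. u j * (LINT x|\<mu>. indicator J x * x ^ (i + j)))"
    using assms by (subst Bochner_Integration.integral_sum)
      (auto intro!: integrable_mult_right integrable_indicator_continuous continuous_intros)
  finally show ?thesis
    by (simp add: moment_mat_def set_lebesgue_integral_def mult.commute)
qed

lemma moment_mat_quadratic_form: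
  assumes "J \<in> sets borel" "J \<subseteq> {a..b}"
  shows "(\<Sum>i<k. \<Sum>j<k. u i * moment_mat \<mu> J k i j * u j) = (LINT x|\<mu>. indicator J x * poly_vec u x ^ 2)"
proof -
  have "(\<Sum>i<k. \<Sum>j<k. u i * moment_mat \<mu> J k i j * u j) = (\<Sum>i<k. u i * moment J (poly_vec u) i)"
    using assms by (simp add: moment_poly_vec sum_distrib_left mult_ac)
  also have "\<dots> = (LINT x|\<mu>. (\<Sum>i<k. u i * (indicator J x * (poly_vec u x * x ^ i))))"
    unfolding moment_def using assms
    by (subst Bochner_Integration.integral_sum)
      (auto intro!: integrable_mult_right integrable_indicator_continuous continuous_intros continuous_poly_vec)
  also have "\<dots> = (LINT x|\<mu>. indicator J x * poly_vec u x ^ 2)"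
    by (simp add: poly_vec_def power2_eq_square sum_distrib_left mult_ac)
  finally show ?thesis .
qed

lemma pos_def_moment_mat_iff:
  assumes J: "J \<in> sets borel" "J \<subseteq> {a..b}"
  shows "pos_def (moment_mat \<mu> J k) k \<longleftrightarrow> mat_range (moment_mat \<mu> J k) k = fin_vecs k"
proof
  assume "pos_def (moment_mat \<mu> J k) k"
  then show "mat_range (moment_mat \<mu> J k) k = fin_vecs k"
    by (intro mat_range_eq_fin_vecs_if_inj inj_if_pos_def)
next
  assume full: "mat_range (moment_mat \<mu> J k) k = fin_vecs k"
  have sym: "\<forall>i<k. \<forall>j<k. moment_mat \<mu> J k i j = moment_mat \<mu> J k j i"
    by (simp add: moment_mat_def add.commute)
  have "(\<Sum>i<k. \<Sum>j<k. c i * moment_mat \<mu> J k i j * c j) > 0" if c: "\<exists>i<k. c i \<noteq> 0" for c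
  proof (rule ccontr)
    let ?p = "\<lambda>x. indicator J x * poly_vec c x ^ 2"
    assume "\<not> ?thesis"
    moreover have "0 \<le> integral\<^sup>L \<mu> ?p"
      by (rule Bochner_Integration.integral_nonneg) simp
    ultimately have "integral\<^sup>L \<mu> ?p = 0"
      using moment_mat_quadratic_form[OF J] by simp
    moreover have "integrable \<mu> ?p"
      using J by (intro integrable_indicator_continuous continuous_intros continuous_poly_vec)
    ultimately have "AE x in \<mu>. ?p x = 0"
      by (subst integral_nonneg_eq_0_iff_AE[symmetric]) auto
    then have "AE x in \<mu>. indicator J x * (poly_vec c x * x ^ i) = 0" for i
      by eventually_elim (auto simp: indicator_def)
    then have "moment J (poly_vec c) i = 0" for i
      unfolding moment_def by (rule integral_eq_zero_AE)
    then have "mat_vec (moment_mat \<mu> J k) k c = 0"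
      using moment_poly_vec[OF J] by (simp add: mat_vec_def fun_eq_iff)
    then show False
      using inj_if_mat_range_eq_fin_vecs[OF sym full] c by blast
  qed
  with sym show "pos_def (moment_mat \<mu> J k) k"
    unfolding pos_def_def by blast
qed

definition split_poly :: "(nat \<Rightarrow> real) \<Rightarrow> (nat \<Rightarrow> real) \<Rightarrow> real \<Rightarrow> real" where
  "split_poly u v x = indicator L x * poly_vec u x + indicator R x * poly_vec v x"

abbreviation "M\<^sub>L \<equiv> moment_mat \<mu> L k"
abbreviation "M\<^sub>R \<equiv> moment_mat \<mu> R k"

definition "V = L2_Qk \<mu> Q k"
definition "W = mat_range M\<^sub>L k \<inter> mat_range M\<^sub>R k"

lemma set_integral_split_poly:
  "(LINT x:Q|\<mu>. split_poly u v x * x ^ i) = moment L (poly_vec u) i + moment R (poly_vec v) i"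
proof -
  have "(LINT x:Q|\<mu>. split_poly u v x * x ^ i) =
      (LINT x|\<mu>. indicator L x * (poly_vec u x * x ^ i) + indicator R x * (poly_vec v x * x ^ i))"
    unfolding set_lebesgue_integral_def
    by (intro Bochner_Integration.integral_cong) (auto simp: split_poly_def indicator_def L_def R_def)
  also have "\<dots> = moment L (poly_vec u) i + moment R (poly_vec v) i"
    unfolding moment_def using L_R_subset L_R_sets
    by (intro Bochner_Integration.integral_add integrable_indicator_continuous continuous_intros continuous_poly_vec) auto
  finally show ?thesis .
qed

lemma mat_vec_moment_mat:
  assumes "J \<in> sets borel" "J \<subseteq> {a..b}"
  shows "mat_vec (moment_mat \<mu> J k) k u = (\<lambda>i. if i < k then moment J (poly_vec u) i else 0)"
  by (simp add: mat_vec_def moment_poly_vec[OF assms] fun_eq_iff)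

lemma mem_V_iff: "f \<in> V \<longleftrightarrow> (\<exists>u v. f = split_poly u v \<and> mat_vec M\<^sub>L k u + mat_vec M\<^sub>R k v = 0)"
proof
  assume "f \<in> V"
  then obtain p q :: "real poly" where pq: "\<forall>i\<ge>k. coeff p i = 0" "\<forall>i\<ge>k. coeff q i = 0"
    "f = (\<lambda>x. indicator L x * poly p x + indicator R x * poly q x)"
    "\<forall>i<k. (LINT x:Q|\<mu>. f x * x ^ i) = 0"
    unfolding V_def L2_Qk_def Q_left_Q Q_right_Q by blast
  have "f = split_poly (coeff p) (coeff q)"
    using pq(1-3) by (simp add: split_poly_def poly_vec_def poly_eq_sum_coeff fun_eq_iff)
  moreover from this have "mat_vec M\<^sub>L k (coeff p) + mat_vec M\<^sub>R k (coeff q) = 0"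
    using pq(4) L_R_subset L_R_sets by (simp add: mat_vec_moment_mat set_integral_split_poly fun_eq_iff)
  ultimately show "\<exists>u v. f = split_poly u v \<and> mat_vec M\<^sub>L k u + mat_vec M\<^sub>R k v = 0"
    by blast
next
  assume "\<exists>u v. f = split_poly u v \<and> mat_vec M\<^sub>L k u + mat_vec M\<^sub>R k v = 0"
  then obtain u v where f: "f = split_poly u v" and uv: "mat_vec M\<^sub>L k u + mat_vec M\<^sub>R k v = 0"
    by blast
  define p where "p = (\<Sum>j<k. monom (u j) j)"
  define q where "q = (\<Sum>j<k. monom (v j) j)"
  have "(LINT x:Q|\<mu>. f x * x ^ i) = 0" if "i < k" for i
    using fun_cong[OF uv, of i] that L_R_subset L_R_sets by (simp add: f set_integral_split_poly mat_vec_moment_mat)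
  moreover have "f = (\<lambda>x. indicator L x * poly p x + indicator R x * poly q x)"
    by (simp add: f p_def q_def split_poly_def poly_vec_def coeff_poly_sum_monom fun_eq_iff)
  ultimately show "f \<in> V"
    unfolding V_def L2_Qk_def Q_left_Q Q_right_Q
    by (intro CollectI exI[of _ p] exI[of _ q]) (simp add: p_def q_def coeff_poly_sum_monom)
qed

lemma split_poly_lincomb:
  "split_poly u v x + c * split_poly u' v' x = split_poly (\<lambda>j. u j + c * u' j) (\<lambda>j. v j + c * v' j) x"
  by (simp add: split_poly_def poly_vec_def sum.distrib sum_distrib_left algebra_simps)

lemma V_zero: "(\<lambda>x. 0) \<in> V"
  unfolding mem_V_iff by (intro exI[of _ "\<lambda>_. 0"]) (simp add: split_poly_def poly_vec_def mat_vec_def fun_eq_iff)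

lemma V_add_scale:
  assumes "f \<in> V" "g \<in> V"
  shows "(\<lambda>x. f x + c * g x) \<in> V"
proof -
  obtain u v u' v' where f: "f = split_poly u v" "mat_vec M\<^sub>L k u + mat_vec M\<^sub>R k v = 0"
    and g: "g = split_poly u' v'" "mat_vec M\<^sub>L k u' + mat_vec M\<^sub>R k v' = 0"
    using assms unfolding mem_V_iff by blast
  have "mat_vec M\<^sub>L k (\<lambda>j. u j + c * u' j) + mat_vec M\<^sub>R k (\<lambda>j. v j + c * v' j) =
      (\<lambda>i. (mat_vec M\<^sub>L k u + mat_vec M\<^sub>R k v) i + c * (mat_vec M\<^sub>L k u' + mat_vec M\<^sub>R k v') i)"
    by (simp add: mat_vec_lincomb fun_eq_iff algebra_simps)
  also have "\<dots> = 0"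
    by (simp add: f(2) g(2) fun_eq_iff)
  finally have "mat_vec M\<^sub>L k (\<lambda>j. u j + c * u' j) + mat_vec M\<^sub>R k (\<lambda>j. v j + c * v' j) = 0" .
  then show ?thesis
    unfolding mem_V_iff f(1) g(1) split_poly_lincomb by blast
qed

lemma V_lincomb: "(\<And>i. i \<in> I \<Longrightarrow> f i \<in> V) \<Longrightarrow> (\<lambda>x. \<Sum>i\<in>I. c i * f i x) \<in> V"
proof (induct I rule: infinite_finite_induct)
  case (insert i I)
  then have "(\<lambda>x. (\<Sum>i\<in>I. c i * f i x) + c i * f i x) \<in> V"
    by (intro V_add_scale) auto
  then show ?case
    using insert by (simp add: add.commute)
qed (auto simp: V_zero)

lemma V_scale: "f \<in> V \<Longrightarrow> (\<lambda>x. c * f x) \<in> V"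
  using V_add_scale[OF V_zero] by simp

lemma bdd_supported_V: "f \<in> V \<Longrightarrow> bdd_supported f"
  unfolding mem_V_iff split_poly_def using L_R_subset L_R_sets
  by (auto intro!: bdd_supported_add bdd_supported_mult_continuous bdd_supported_indicator continuous_poly_vec)

lemma integrable_V_mult_power: "f \<in> V \<Longrightarrow> integrable \<mu> (\<lambda>x. f x * x ^ i)"
  by (intro integrable_bdd_supported bdd_supported_mult_continuous bdd_supported_V continuous_intros)

lemma integrable_V_mult: "f \<in> V \<Longrightarrow> g \<in> V \<Longrightarrow> integrable \<mu> (\<lambda>x. f x * g x)"
  by (intro integrable_bdd_supported bdd_supported_mult bdd_supported_V)

definition left_moments :: "(real \<Rightarrow> real) \<Rightarrow> nat \<Rightarrow> real" where
  "left_moments f = (\<lambda>i. if i < k then moment L f i else 0)"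

lemma left_moments_split_poly: "left_moments (split_poly u v) = mat_vec M\<^sub>L k u"
proof -
  have "moment L (split_poly u v) i = moment L (poly_vec u) i" for i
    unfolding moment_def
    by (intro Bochner_Integration.integral_cong) (auto simp: split_poly_def indicator_def L_def R_def)
  then show ?thesis
    by (simp add: left_moments_def mat_vec_moment_mat[OF L_R_sets(1) L_R_subset(1)] fun_eq_iff)
qed

lemma left_moments_lincomb:
  assumes "\<And>i. i \<in> I \<Longrightarrow> f i \<in> V"
  shows "left_moments (\<lambda>x. \<Sum>i\<in>I. c i * f i x) = (\<Sum>i\<in>I. vscale (c i) (left_moments (f i)))"
proof -
  have "moment L (\<lambda>x. \<Sum>i\<in>I. c i * f i x) t = (\<Sum>i\<in>I. c i * moment L (f i) t)" for t
  proof -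
    have "integrable \<mu> (\<lambda>x. f i x * (indicator L x * x ^ t))" if "i \<in> I" for i
      using assms[OF that] L_R_subset L_R_sets
      by (intro integrable_bdd_supported bdd_supported_mult bdd_supported_V
          bdd_supported_mult_continuous bdd_supported_indicator continuous_intros) auto
    then have "(LINT x|\<mu>. (\<Sum>i\<in>I. c i * f i x) * (indicator L x * x ^ t)) =
        (\<Sum>i\<in>I. c i * (LINT x|\<mu>. f i x * (indicator L x * x ^ t)))"
      by (rule integral_lincomb_mult)
    then show ?thesis
      by (simp add: moment_def mult_ac)
  qed
  then show ?thesis
    by (simp add: left_moments_def sum_fun_apply vscale_def fun_eq_iff)
qed

lemma left_moments_in_W: "f \<in> V \<Longrightarrow> left_moments f \<in> W"
proof -
  assume "f \<in> V"
  then obtain u v where f: "f = split_poly u v" and uv: "mat_vec M\<^sub>L k u + mat_vec M\<^sub>R k v = 0"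
    unfolding mem_V_iff by blast
  have "left_moments f = mat_vec M\<^sub>L k u"
    by (simp add: f left_moments_split_poly)
  moreover have "mat_vec M\<^sub>L k u = mat_vec M\<^sub>R k (\<lambda>j. - v j)"
    using uv by (simp add: mat_vec_uminus eq_neg_iff_add_eq_0)
  ultimately show ?thesis
    unfolding W_def Int_iff mat_range_iff by metis
qed

lemma W_subset_left_moments_image: "W \<subseteq> left_moments ` V"
proof
  fix w assume "w \<in> W"
  then obtain u v where u: "w = mat_vec M\<^sub>L k u" and v: "w = mat_vec M\<^sub>R k v"
    unfolding W_def Int_iff mat_range_iff by blast
  then have "mat_vec M\<^sub>L k u + mat_vec M\<^sub>R k (\<lambda>j. - v j) = 0"
    by (simp add: mat_vec_uminus)
  then have "split_poly u (\<lambda>j. - v j) \<in> V"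
    unfolding mem_V_iff by blast
  then show "w \<in> left_moments ` V"
    using u left_moments_split_poly by (metis image_eqI)
qed

lemma left_moments_image: "left_moments ` V = W"
  using left_moments_in_W W_subset_left_moments_image by blast

lemma split_poly_square:
  "split_poly u v x * split_poly u v x = indicator L x * poly_vec u x ^ 2 + indicator R x * poly_vec v x ^ 2"
  by (auto simp: split_poly_def indicator_def L_def R_def power2_eq_square)

lemma AE_zero_iff_left_moments:
  assumes "f \<in> V"
  shows "(AE x in \<mu>. f x = 0) \<longleftrightarrow> left_moments f = 0"
proof
  assume "AE x in \<mu>. f x = 0"
  then have "AE x in \<mu>. indicator L x * (f x * x ^ i) = 0" for i
    by eventually_elim simp
  then show "left_moments f = 0"
    by (simp add: left_moments_def moment_def integral_eq_zero_AE fun_eq_iff)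
next
  assume lm: "left_moments f = 0"
  obtain u v where f: "f = split_poly u v" and uv: "mat_vec M\<^sub>L k u + mat_vec M\<^sub>R k v = 0"
    using assms unfolding mem_V_iff by blast
  have Lu: "mat_vec M\<^sub>L k u = 0"
    using lm by (simp add: f left_moments_split_poly)
  with uv have Rv: "mat_vec M\<^sub>R k v = 0"
    by simp
  have "(LINT x|\<mu>. f x * f x) =
      (LINT x|\<mu>. indicator L x * poly_vec u x ^ 2) + (LINT x|\<mu>. indicator R x * poly_vec v x ^ 2)"
    unfolding f split_poly_square using L_R_subset L_R_sets
    by (intro Bochner_Integration.integral_add integrable_indicator_continuous continuous_intros continuous_poly_vec) auto
  also have "\<dots> = 0"
    using Lu Rv L_R_subset L_R_sets by (simp add: moment_mat_quadratic_form[symmetric] quadratic_form_mat_vec)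
  finally have "AE x in \<mu>. f x * f x = 0"
    using integral_nonneg_eq_0_iff_AE[OF integrable_V_mult[OF assms assms]] by simp
  then show "AE x in \<mu>. f x = 0"
    by eventually_elim simp
qed

lemma L2_indep_iff:
  assumes "finite F" "F \<subseteq> V"
  shows "L2_indep \<mu> F \<longleftrightarrow> inj_on left_moments F \<and> vs.independent (left_moments ` F)"
proof -
  have "(AE x in \<mu>. (\<Sum>f\<in>F. c f * f x) = 0) \<longleftrightarrow> (\<Sum>f\<in>F. vscale (c f) (left_moments f)) = 0" for c
  proof -
    have "(\<lambda>x. \<Sum>f\<in>F. c f * f x) \<in> V"
      using V_lincomb[of F "\<lambda>f. f" c] assms(2) by auto
    moreover have "left_moments (\<lambda>x. \<Sum>f\<in>F. c f * f x) = (\<Sum>f\<in>F. vscale (c f) (left_moments f))"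
      using left_moments_lincomb[of F "\<lambda>f. f" c] assms(2) by auto
    ultimately show ?thesis
      by (simp add: AE_zero_iff_left_moments)
  qed
  then show ?thesis
    unfolding L2_indep_def using vs.scalars_zero_iff_inj_on_independent[OF assms(1)] by simp
qed

lemma W_subset_fin_vecs: "W \<subseteq> fin_vecs k"
  unfolding W_def using mat_range_subset_fin_vecs by blast

lemma card_le_dim_W_if_L2_indep:
  assumes F: "finite F" "F \<subseteq> V" "L2_indep \<mu> F"
  shows "card F \<le> vs.dim W"
proof -
    have inj: "inj_on left_moments F" and indep: "vs.independent (left_moments ` F)"
      using L2_indep_iff[OF F(1,2)] F(3) by simp_all
    have "left_moments ` F \<subseteq> W"
      unfolding left_moments_image[symmetric] using F(2) by (rule image_mono)
    then have "card (left_moments ` F) \<le> vs.dim W"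
      using card_le_dim_if_subset_fin_vecs[OF W_subset_fin_vecs _ indep] by simp
    then show ?thesis
      using card_image[OF inj] by simp
qed

lemma L2_dim_V: "L2_dim \<mu> V = vs.dim W"
proof -
  let ?S = "{card F |F. finite F \<and> F \<subseteq> V \<and> L2_indep \<mu> F}"
  obtain C where C: "C \<subseteq> W" "vs.independent C" "W \<subseteq> vs.span C" "card C = vs.dim W"
    by (rule vs.basis_exists)
  have fin: "finite C"
    using card_le_dim_if_subset_fin_vecs[OF W_subset_fin_vecs C(1,2)] by simp
  have "\<forall>w\<in>C. \<exists>f. f \<in> V \<and> left_moments f = w"
    using C(1) unfolding left_moments_image[symmetric] by blast
  then obtain g where g: "\<forall>w\<in>C. g w \<in> V \<and> left_moments (g w) = w"
    by (rule bchoice[THEN exE])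
  have inj_g: "inj_on g C"
    using g by (intro inj_onI) metis
  have "inj_on left_moments (g ` C)"
    using g by (intro inj_onI) auto
  moreover have "left_moments ` g ` C = C"
    unfolding image_image using g by simp
  moreover have fin_g: "finite (g ` C)"
    using fin by simp
  moreover have sub_g: "g ` C \<subseteq> V"
    using g by blast
  ultimately have "L2_indep \<mu> (g ` C)"
    using L2_indep_iff[OF fin_g sub_g] C(2) by simp
  then have "vs.dim W \<in> ?S"
    unfolding C(4)[symmetric] card_image[OF inj_g, symmetric] using fin_g sub_g by blast
  moreover have "?S \<subseteq> {..vs.dim W}"
    using card_le_dim_W_if_L2_indep by auto
  ultimately show ?thesis
    unfolding L2_dim_def by (intro Max_eqI) (auto intro: finite_subset)
qed

lemma W_eq_fin_vecs_iff: "W = fin_vecs k \<longleftrightarrow> pos_def M\<^sub>L k \<and> pos_def M\<^sub>R k"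
proof
  assume W: "W = fin_vecs k"
  have "mat_range M\<^sub>L k = fin_vecs k"
    using W mat_range_subset_fin_vecs[of M\<^sub>L k] unfolding W_def by blast
  moreover have "mat_range M\<^sub>R k = fin_vecs k"
    using W mat_range_subset_fin_vecs[of M\<^sub>R k] unfolding W_def by blast
  ultimately show "pos_def M\<^sub>L k \<and> pos_def M\<^sub>R k"
    by (simp add: pos_def_moment_mat_iff L_R_subset L_R_sets)
qed (simp add: W_def pos_def_moment_mat_iff L_R_subset L_R_sets)

lemma dim_W_eq_k_iff: "vs.dim W = k \<longleftrightarrow> W = fin_vecs k"
proof
  assume "vs.dim W = k"
  then have "fin_vecs k \<subseteq> vs.span W"
    by (rule fin_vecs_subset_span_if_dim[OF W_subset_fin_vecs])
  also have "vs.span W = W"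
    unfolding W_def by (intro vs.span_eq_iff[THEN iffD2] vs.subspace_inter subspace_mat_range)
  finally show "W = fin_vecs k"
    using W_subset_fin_vecs by blast
qed (simp add: dim_fin_vecs)

lemma V_vanishes: "f \<in> V \<Longrightarrow> x \<notin> Q \<Longrightarrow> f x = 0"
  unfolding mem_V_iff by (auto simp: split_poly_def L_def R_def)

lemma V_integral_power:
  assumes "f \<in> V" "i < k"
  shows "(LINT x|\<mu>. f x * x ^ i) = 0"
proof -
  have "(LINT x|\<mu>. f x * x ^ i) = (LINT x:Q|\<mu>. f x * x ^ i)"
    unfolding set_lebesgue_integral_def
    by (intro Bochner_Integration.integral_cong) (auto simp: V_vanishes[OF assms(1)] indicator_def)
  also have "\<dots> = 0"
    using assms unfolding V_def L2_Qk_def by auto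
  finally show ?thesis .
qed

lemma V_integral_square_pos:
  assumes "f \<in> V" "\<not> (AE x in \<mu>. f x = 0)"
  shows "(LINT x|\<mu>. f x * f x) > 0"
proof -
  have "(LINT x|\<mu>. f x * f x) \<noteq> 0"
    using assms integral_nonneg_eq_0_iff_AE[OF integrable_V_mult[OF assms(1) assms(1)]] by auto
  moreover have "0 \<le> (LINT x|\<mu>. f x * f x)"
    by (rule Bochner_Integration.integral_nonneg) simp
  ultimately show ?thesis
    by linarith
qed

lemma exists_nonnull_orthogonal:
  assumes full: "W = fin_vecs k" and "m < k"
    and int: "\<And>r f. r < m \<Longrightarrow> f \<in> V \<Longrightarrow> integrable \<mu> (\<lambda>x. f x * h r x)"
  shows "\<exists>g\<in>V. \<not> (AE x in \<mu>. g x = 0) \<and> (\<forall>r<m. (LINT x|\<mu>. g x * h r x) = 0)"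
proof -
  have "\<exists>f. f \<in> V \<and> left_moments f = unit_vec j" if "j \<in> {..<k}" for j
  proof -
    have "unit_vec j \<in> left_moments ` V"
      unfolding left_moments_image full using that by (simp add: unit_vec_in_fin_vecs)
    then show ?thesis
      by (auto elim: imageE)
  qed
  then have "\<forall>j\<in>{..<k}. \<exists>f. f \<in> V \<and> left_moments f = unit_vec j" ..
  then obtain e where "\<forall>j\<in>{..<k}. e j \<in> V \<and> left_moments (e j) = unit_vec j"
    by (rule bchoice[THEN exE])
  then have e: "\<And>j. j < k \<Longrightarrow> e j \<in> V" "\<And>j. j < k \<Longrightarrow> left_moments (e j) = unit_vec j"
    by auto
  obtain c where c: "\<exists>j<k. c j \<noteq> 0" "\<forall>r<m. (\<Sum>j<k. (LINT x|\<mu>. e j x * h r x) * c j) = 0"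
    using exists_nonzero_solution[OF \<open>m < k\<close>, of "\<lambda>r j. LINT x|\<mu>. e j x * h r x"] by blast
  define g where "g x = (\<Sum>j<k. c j * e j x)" for x
  have gV: "g \<in> V"
    unfolding g_def using e(1) by (intro V_lincomb) auto
  have "left_moments g = (\<Sum>j<k. vscale (c j) (left_moments (e j)))"
    unfolding g_def by (rule left_moments_lincomb) (use e(1) in auto)
  also have "\<dots> = (\<Sum>j<k. vscale (c j) (unit_vec j))"
    using e(2) by simp
  finally have "left_moments g \<noteq> 0"
    using c(1) by (auto simp: lincomb_unit_vecs fun_eq_iff)
  then have "\<not> (AE x in \<mu>. g x = 0)"
    using AE_zero_iff_left_moments[OF gV] by blast
  moreover have "(LINT x|\<mu>. g x * h r x) = 0" if "r < m" for r
  proof -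
    have "(LINT x|\<mu>. g x * h r x) = (\<Sum>j<k. c j * (LINT x|\<mu>. e j x * h r x))"
      unfolding g_def using int[OF that] e(1) by (intro integral_lincomb_mult) auto
    also have "\<dots> = 0"
      using c(2) that by (simp add: mult.commute)
    finally show ?thesis .
  qed
  ultimately show ?thesis
    using gV by blast
qed

lemma exists_normalized_orthogonal:
  assumes "W = fin_vecs k" and "m < k"
    and "\<And>r f. r < m \<Longrightarrow> f \<in> V \<Longrightarrow> integrable \<mu> (\<lambda>x. f x * h r x)"
  shows "\<exists>g\<in>V. (LINT x|\<mu>. g x * g x) = 1 \<and> (\<forall>r<m. (LINT x|\<mu>. g x * h r x) = 0)"
proof -
  obtain g where gV: "g \<in> V"
    and g: "\<not> (AE x in \<mu>. g x = 0) \<and> (\<forall>r<m. (LINT x|\<mu>. g x * h r x) = 0)"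
    using exists_nonnull_orthogonal[OF assms] by (rule bexE)
  then have nonnull: "\<not> (AE x in \<mu>. g x = 0)" and orth: "\<forall>r<m. (LINT x|\<mu>. g x * h r x) = 0"
    by simp_all
  have pos: "(LINT x|\<mu>. g x * g x) > 0"
    by (rule V_integral_square_pos[OF gV nonnull])
  define s where "s = sqrt (LINT x|\<mu>. g x * g x)"
  have s: "s > 0" "s * s = (LINT x|\<mu>. g x * g x)"
    using pos by (auto simp: s_def)
  have "(LINT x|\<mu>. (g x / s) * (g x / s)) = 1"
    using s pos by (simp add: field_simps)
  moreover have "(LINT x|\<mu>. (g x / s) * h r x) = 0" if "r < m" for r
    using orth that by (simp add: field_simps)
  moreover have "(\<lambda>x. g x / s) \<in> V"
    using V_scale[OF gV, of "1 / s"] by simp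
  ultimately show ?thesis
    by (intro bexI[of _ "\<lambda>x. g x / s"]) auto
qed

definition adapted_tail :: "nat \<Rightarrow> (nat \<Rightarrow> real \<Rightarrow> real) \<Rightarrow> bool" where
  "adapted_tail n e \<longleftrightarrow>
     (\<forall>l\<in>{n<..k}. e l \<in> V \<and> (\<forall>i\<in>{k..k+l-2}. (LINT x|\<mu>. e l x * x ^ i) = 0)) \<and>
     (\<forall>l\<in>{n<..k}. \<forall>l'\<in>{n<..k}. (LINT x|\<mu>. e l x * e l' x) = (if l = l' then 1 else 0))"

lemma adapted_tail_update:
  assumes e: "adapted_tail (Suc n) e" and "n < k"
    and g: "g \<in> V" "(LINT x|\<mu>. g x * g x) = 1"
    and g_power: "\<And>i. i \<in> {k..k + Suc n - 2} \<Longrightarrow> (LINT x|\<mu>. g x * x ^ i) = 0"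
    and g_e: "\<And>l. l \<in> {Suc n<..k} \<Longrightarrow> (LINT x|\<mu>. g x * e l x) = 0"
  shows "adapted_tail n (e(Suc n := g))"
proof -
  have e_g: "(LINT x|\<mu>. e l x * g x) = 0" if "l \<in> {Suc n<..k}" for l
    using g_e[OF that] by (simp add: mult.commute)
  have "{n<..k} = insert (Suc n) {Suc n<..k}"
    using \<open>n < k\<close> by auto
  then show ?thesis
    using e g g_power g_e e_g unfolding adapted_tail_def by auto
qed

lemma exists_adapted_tail:
  assumes full: "W = fin_vecs k" and "n \<le> k"
  shows "\<exists>e. adapted_tail n e"
  using \<open>n \<le> k\<close>
proof (induction n rule: inc_induct)
  case base
  show ?case
    by (auto simp: adapted_tail_def)
next
  case (step n)
  then obtain e where e: "adapted_tail (Suc n) e"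
    by blast
  \<comment> \<open>The k - 1 constraints on the new function e (Suc n): vanishing moments of orders
    k, ..., k + n - 1, and orthogonality to e (n + 2), ..., e k.\<close>
  define h where "h r = (if r < n then (\<lambda>x. x ^ (k + r)) else e (r + 2))" for r
  have eV: "e l \<in> V" if "l \<in> {Suc n<..k}" for l
    using e that by (auto simp: adapted_tail_def)
  have "integrable \<mu> (\<lambda>x. f x * h r x)" if "r < k - 1" "f \<in> V" for r f
    using that eV[of "r + 2"] by (cases "r < n") (auto simp: h_def integrable_V_mult_power integrable_V_mult)
  then have "\<exists>g\<in>V. (LINT x|\<mu>. g x * g x) = 1 \<and> (\<forall>r<k - 1. (LINT x|\<mu>. g x * h r x) = 0)"
    using step.hyps by (intro exists_normalized_orthogonal[OF full]) auto
  then obtain g where g: "g \<in> V" "(LINT x|\<mu>. g x * g x) = 1"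
    and g_h: "\<And>r. r < k - 1 \<Longrightarrow> (LINT x|\<mu>. g x * h r x) = 0"
    by blast
  have "(LINT x|\<mu>. g x * x ^ i) = 0" if "i \<in> {k..k + Suc n - 2}" for i
  proof -
    have "i - k < n" "k + (i - k) = i"
      using that step.hyps by auto
    then show ?thesis
      using g_h[of "i - k"] step.hyps by (simp add: h_def)
  qed
  moreover have "(LINT x|\<mu>. g x * e l x) = 0" if "l \<in> {Suc n<..k}" for l
  proof -
    have "\<not> l - 2 < n" "l - 2 < k - 1" "l - 2 + 2 = l"
      using that by auto
    then show ?thesis
      using g_h[of "l - 2"] by (simp add: h_def)
  qed
  ultimately show ?case
    using adapted_tail_update[OF e step.hyps(2) g] by blast
qed

lemma AE_zero_if_orthogonal_to_orthonormal:
  assumes eV: "\<And>l. l \<in> {1..k} \<Longrightarrow> e l \<in> V"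
    and orthonormal: "\<And>l m. l \<in> {1..k} \<Longrightarrow> m \<in> {1..k} \<Longrightarrow>
      (LINT x|\<mu>. e l x * e m x) = (if l = m then 1 else 0)"
    and rV: "r \<in> V" and r_e: "\<And>m. m \<in> {1..k} \<Longrightarrow> (LINT x|\<mu>. r x * e m x) = 0"
  shows "AE x in \<mu>. r x = 0"
proof (rule ccontr)
  assume r_nonnull: "\<not> (AE x in \<mu>. r x = 0)"
  have e_r: "(LINT x|\<mu>. e m x * r x) = 0" if "m \<in> {1..k}" for m
    using r_e[OF that] by (simp add: mult.commute)
  have r_notin: "r \<notin> e ` {1..k}"
  proof
    assume "r \<in> e ` {1..k}"
    then obtain m where "m \<in> {1..k}" "r = e m"
      by blast
    then show False
      using r_e[of m] orthonormal[of m m] by simp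
  qed
  let ?F = "insert r (e ` {1..k})"
  have "L2_indep \<mu> ?F"
  proof (rule L2_indep_if_orthogonal)
    show "integrable \<mu> (\<lambda>x. f x * g x)" if "f \<in> ?F" "g \<in> ?F" for f g
      using that rV eV by (auto intro: integrable_V_mult)
    show "(LINT x|\<mu>. f x * g x) = 0" if "f \<in> ?F" "g \<in> ?F" "f \<noteq> g" for f g
      using that by (auto simp: r_e e_r orthonormal)
    show "(LINT x|\<mu>. f x * f x) \<noteq> 0" if "f \<in> ?F" for f
      using that V_integral_square_pos[OF rV r_nonnull] by (auto simp: orthonormal)
  qed simp
  then have "card ?F \<le> vs.dim W"
    using rV eV by (intro card_le_dim_W_if_L2_indep) auto
  also have "\<dots> \<le> k"
    by (rule dim_le_if_subset_fin_vecs[OF W_subset_fin_vecs])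
  finally have "card ?F \<le> k" .
  moreover have "inj_on e {1..k}"
    using orthonormal by (rule inj_on_if_orthonormal)
  then have "card ?F = Suc k"
    using r_notin by (simp add: card_image)
  ultimately show False
    by simp
qed

lemma orthonormal_spans_V:
  assumes eV: "\<And>l. l \<in> {1..k} \<Longrightarrow> e l \<in> V"
    and orthonormal: "\<And>l m. l \<in> {1..k} \<Longrightarrow> m \<in> {1..k} \<Longrightarrow>
      (LINT x|\<mu>. e l x * e m x) = (if l = m then 1 else 0)"
    and f: "f \<in> V"
  shows "\<exists>c. AE x in \<mu>. f x = (\<Sum>l=1..k. c l * e l x)"
proof -
  define c where "c l = (LINT x|\<mu>. f x * e l x)" for l
  define r where "r x = f x + (-1) * (\<Sum>l=1..k. c l * e l x)" for x
  have rV: "r \<in> V"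
    unfolding r_def using eV by (intro V_add_scale f V_lincomb)
  have r_e: "(LINT x|\<mu>. r x * e m x) = 0" if m: "m \<in> {1..k}" for m
  proof -
    have "(LINT x|\<mu>. (\<Sum>l=1..k. c l * e l x) * e m x) = (\<Sum>l=1..k. c l * (LINT x|\<mu>. e l x * e m x))"
      using eV m by (intro integral_lincomb_mult integrable_V_mult)
    also have "\<dots> = (\<Sum>l=1..k. if l = m then c l else 0)"
      using orthonormal[OF _ m] by (intro sum.cong) auto
    also have "\<dots> = c m"
      using m by simp
    finally have "(LINT x|\<mu>. (\<Sum>l=1..k. c l * e l x) * e m x) = c m" .
    moreover have "integrable \<mu> (\<lambda>x. (\<Sum>l=1..k. c l * e l x) * e m x)"
      using eV m by (intro integrable_V_mult V_lincomb)
    ultimately show ?thesis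
      unfolding r_def using integrable_V_mult[OF f eV[OF m]] by (simp add: c_def algebra_simps)
  qed
  have "AE x in \<mu>. r x = 0"
    by (rule AE_zero_if_orthogonal_to_orthonormal[OF eV orthonormal rV r_e])
  then have "AE x in \<mu>. f x = (\<Sum>l=1..k. c l * e l x)"
    by eventually_elim (simp add: r_def)
  then show ?thesis
    by blast
qed

lemma exists_adapted_basis:
  assumes "pos_def (moment_mat \<mu> (Q_left Q) k) k" "pos_def (moment_mat \<mu> (Q_right Q) k) k"
  shows "\<exists>e. adapted_basis \<mu> Q k e"
proof -
  have "W = fin_vecs k"
    using assms by (simp add: W_eq_fin_vecs_iff Q_left_Q Q_right_Q)
  then obtain e where e: "adapted_tail 0 e"
    using exists_adapted_tail by blast
  have "{0<..k} = {1..k}"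
    by auto
  then have eV: "\<And>l. l \<in> {1..k} \<Longrightarrow> e l \<in> V"
    and orthonormal: "\<And>l m. l \<in> {1..k} \<Longrightarrow> m \<in> {1..k} \<Longrightarrow>
      (LINT x|\<mu>. e l x * e m x) = (if l = m then 1 else 0)"
    and extra: "\<And>l i. l \<in> {1..k} \<Longrightarrow> i \<in> {k..k+l-2} \<Longrightarrow> (LINT x|\<mu>. e l x * x ^ i) = 0"
    using e unfolding adapted_tail_def by auto
  have "adapted_basis \<mu> Q k e"
    unfolding adapted_basis_def V_def[symmetric]
    using eV orthonormal extra orthonormal_spans_V V_integral_power by auto
  then show ?thesis
    by blast
qed

lemma L2_dim_eq_dim_range_inter:
  "L2_dim \<mu> (L2_Qk \<mu> Q k) =
    vs.dim (mat_range (moment_mat \<mu> (Q_left Q) k) k \<inter> mat_range (moment_mat \<mu> (Q_right Q) k) k)"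
  using L2_dim_V unfolding V_def W_def Q_left_Q Q_right_Q .

lemma L2_dim_eq_iff_pos_def:
  "L2_dim \<mu> (L2_Qk \<mu> Q k) = k \<longleftrightarrow>
    pos_def (moment_mat \<mu> (Q_left Q) k) k \<and> pos_def (moment_mat \<mu> (Q_right Q) k) k"
  using L2_dim_V dim_W_eq_k_iff W_eq_fin_vecs_iff unfolding V_def Q_left_Q Q_right_Q by simp

end

section \<open>Dyadic grids\<close>

lemma dyadic_grid_interval:
  assumes "dyadic_grid D" "Q \<in> D"
  obtains a b where "a < b" "Q = {a..<b}"
proof -
  obtain a and j :: int where "Q = {a..<a + 2 powr j}"
    using assms unfolding dyadic_grid_def by blast
  then show ?thesis
    using that[of a "a + 2 powr j"] by simp
qed

lemma dyadic_grid_parent: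
  assumes grid: "dyadic_grid D" and "Q \<in> D"
  shows "\<exists>P\<in>D. Q = Q_left P \<or> Q = Q_right P"
proof -
  obtain a and j :: int where Q: "Q = {a..<a + 2 powr j}"
    using assms unfolding dyadic_grid_def by blast
  define h where "h = (2::real) powr j"
  have h: "h > 0"
    by (simp add: h_def)
  have unique: "\<exists>!Q. Q \<in> D \<and> x \<in> Q \<and> Sup Q - Inf Q = 2 powr j'" for x and j' :: int
    using grid unfolding dyadic_grid_def by blast
  obtain P where P: "P \<in> D" "a \<in> P" "Sup P - Inf P = 2 powr (j + 1)"
    using unique[of a "j + 1"] by blast
  obtain c and j' :: int where "P = {c..<c + 2 powr j'}"
    using grid P(1) unfolding dyadic_grid_def by blast
  with P(3) have P_eq: "P = {c..<c + 2 * h}"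
    by (simp add: h_def powr_add mult.commute)
  have mid: "(c + (c + 2 * h)) / 2 = c + h"
    by simp
  have halves: "Q_left P = {c..<c + h}" "Q_right P = {c + h..<c + 2 * h}"
    using h unfolding Q_left_def Q_right_def P_eq by (simp_all only: cInf_atLeastLessThan cSup_atLeastLessThan mid)
  have "a \<in> {c..<c + h} \<or> a \<in> {c + h..<c + 2 * h}"
    using P(2) unfolding P_eq by auto
  then have a_half: "a \<in> Q_left P \<or> a \<in> Q_right P"
    unfolding halves .
  have "Q_left P \<in> D" "Q_right P \<in> D"
    using grid P(1) unfolding dyadic_grid_def by blast+
  moreover have "Sup (Q_left P) - Inf (Q_left P) = 2 powr j" "Sup (Q_right P) - Inf (Q_right P) = 2 powr j"
    using h by (simp_all add: halves h_def)
  moreover have "Q \<in> D \<and> a \<in> Q \<and> Sup Q - Inf Q = 2 powr j"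
    using assms(2) by (simp add: Q)
  ultimately show ?thesis
    using unique[of a j] a_half P(1) by metis
qed

theorem theorem2:
  fixes \<mu> :: "real measure" and k :: nat and D :: "real set set"
  assumes "locally_finite_borel \<mu>"
    and "dyadic_grid D"
  shows "(\<forall>Q\<in>D. L2_dim \<mu> (L2_Qk \<mu> Q k) =
            vector_space.dim vscale
              (mat_range (moment_mat \<mu> (Q_left Q) k) k \<inter> mat_range (moment_mat \<mu> (Q_right Q) k) k))
       \<and> ((\<forall>Q\<in>D. L2_dim \<mu> (L2_Qk \<mu> Q k) = k) \<longleftrightarrow> (\<forall>Q\<in>D. pos_def (moment_mat \<mu> Q k) k))
       \<and> ((\<forall>Q\<in>D. pos_def (moment_mat \<mu> Q k) k) \<longrightarrow>
           (\<forall>Q\<in>D. \<exists>a :: nat \<Rightarrow> real \<Rightarrow> real.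
              (\<forall>l\<in>{1..k}. a l \<in> L2_Qk \<mu> Q k) \<and>
              (\<forall>l\<in>{1..k}. \<forall>m\<in>{1..k}.
                  (LINT x|\<mu>. a l x * a m x) = (if l = m then 1 else 0)) \<and>
              (\<forall>f\<in>L2_Qk \<mu> Q k. \<exists>c :: nat \<Rightarrow> real.
                  AE x in \<mu>. f x = (\<Sum>l=1..k. c l * a l x)) \<and>
              (\<forall>l\<in>{1..k}. \<forall>i<k. (LINT x|\<mu>. a l x * x ^ i) = 0) \<and>
              (\<forall>l\<in>{2..k}. \<forall>i\<in>{k..k+l-2}. (LINT x|\<mu>. a l x * x ^ i) = 0)))"
proof -
  have cell: "\<exists>a b. split_interval \<mu> a b \<and> Q = {a..<b}" if "Q \<in> D" for Q
    using dyadic_grid_interval[OF assms(2) that] assms(1) by (metis split_interval.intro)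
  have halves: "Q_left Q \<in> D" "Q_right Q \<in> D" if "Q \<in> D" for Q
    using assms(2) that unfolding dyadic_grid_def by blast+
  have halves_pos_def: "L2_dim \<mu> (L2_Qk \<mu> Q k) = k \<longleftrightarrow>
      pos_def (moment_mat \<mu> (Q_left Q) k) k \<and> pos_def (moment_mat \<mu> (Q_right Q) k) k" if "Q \<in> D" for Q
    using cell[OF that] split_interval.L2_dim_eq_iff_pos_def by blast
  have "(\<forall>Q\<in>D. L2_dim \<mu> (L2_Qk \<mu> Q k) = k) \<longleftrightarrow> (\<forall>Q\<in>D. pos_def (moment_mat \<mu> Q k) k)"
  proof
    assume "\<forall>Q\<in>D. L2_dim \<mu> (L2_Qk \<mu> Q k) = k"
    then show "\<forall>Q\<in>D. pos_def (moment_mat \<mu> Q k) k"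
      using halves_pos_def dyadic_grid_parent[OF assms(2)] by metis
  qed (use halves halves_pos_def in blast)
  moreover have "\<exists>e. adapted_basis \<mu> Q k e"
    if "Q \<in> D" "\<forall>Q\<in>D. pos_def (moment_mat \<mu> Q k) k" for Q
    using cell[OF that(1)] split_interval.exists_adapted_basis halves[OF that(1)] that(2) by blast
  ultimately show ?thesis
    using cell split_interval.L2_dim_eq_dim_range_inter unfolding adapted_basis_def by blast
qed

end
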